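(* Consider the stochastic extra-momentum scheme with non-negative parameters $\alpha,\gamma,\tau$: starting from $z^0\in\mathcal Z$ with $z^{-1}:=z^0$ and $\hat F(z^{-1}):=\hat F(z^0)$, for $k\ge0$, $$z^{k+1}=P_{\mathcal Z}\big(z^k-\alpha\hat F(z^k)+\gamma(z^k-z^{k-1})-\tau(\hat F(z^k)-\hat F(z^{k-1}))\big).$$ Then for every $k\ge0$, $$\mathbb E\Big[\Big(\tfrac12+\tfrac{\alpha\mu}{2}-\tfrac{\gamma}{2}\Big)\|z^{k+1}-z^*\|^2+\alpha(z^{k+1}-z^* )^\top(\hat F(z^k)-\hat F(z^{k+1}))+\tfrac14\|z^{k+1}-z^k\|^2\Big]$$ $$\le\mathbb E\Big[\tfrac12\|z^k-z^*\|^2+\tau(z^k-z^* )^\top(\hat F(z^{k-1})-\hat F(z^k))+\Big(2\tau^2L^2+\tfrac{\gamma}{2}\Big)\|z^k-z^{k-1}\|^2\Big]+8\tau^2\sigma^2+\frac{\alpha\delta^2}{2\mu}.$$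
   Context: Let $\mathcal Z\subseteq\mathbb R^n$ be a nonempty closed convex set. Let $F:\mathcal Z\to\mathbb R^n$ satisfy $(F(z)-F(z'))^\top(z-z')\ge\mu\|z-z'\|^2$ and $\|F(z)-F(z')\|\le L\|z-z'\|$ for all $z,z'\in\mathcal Z$, where $0<\mu\le L$. Let $z^*$ be the unique point of $\mathcal Z$ with $F(z^* )^\top(z-z^* )\ge 0$ for all $z\in\mathcal Z$. $P_{\mathcal Z}$ denotes Euclidean projection onto $\mathcal Z$. A stochastic oracle returns $\hat F(z,\xi)$ for a random sample $\xi$, and satisfies, for every $z\in\mathcal Z$, $\mathbb E_\xi\|\hat F(z,\xi)-F(z)\|\le\delta$ and $\mathbb E_\xi\|\hat F(z,\xi)-F(z)\|^2\le\sigma^2$ for constants $\delta,\sigma\ge0$. Each oracle call $\hat F(z^j)$ means $\hat F(z^j,\xi^j)$ with a fresh sample $\xi^j$ independent of all previous samples (one sample per iterate, reused wherever $\hat F(z^j)$ appears). *)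

theory Defs
  imports "HOL-Probability.Probability"
begin

text \<open>Iterates of the stochastic extra-momentum scheme, as a function of the sample
  sequence w (w k is the sample xi^k used at iterate z^k). Convention: z^{-1} = z^0 and
  the oracle value at z^{-1} is the oracle value at z^0 with sample xi^0; this is realised
  by nat subtraction k - 1 = 0 for k = 0.\<close>

fun em_iter :: "'a::euclidean_space set \<Rightarrow> ('a \<Rightarrow> 'x \<Rightarrow> 'a) \<Rightarrow> real \<Rightarrow> real \<Rightarrow> real
    \<Rightarrow> 'a \<Rightarrow> (nat \<Rightarrow> 'x) \<Rightarrow> nat \<Rightarrow> 'a" where
  "em_iter Z Fh \<alpha> \<gamma> \<tau> z0 w 0 = z0"
| "em_iter Z Fh \<alpha> \<gamma> \<tau> z0 w (Suc k) =
     closest_point Z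
       (em_iter Z Fh \<alpha> \<gamma> \<tau> z0 w k
        - \<alpha> *\<^sub>R Fh (em_iter Z Fh \<alpha> \<gamma> \<tau> z0 w k) (w k)
        + \<gamma> *\<^sub>R (em_iter Z Fh \<alpha> \<gamma> \<tau> z0 w k - em_iter Z Fh \<alpha> \<gamma> \<tau> z0 w (k - 1))
        - \<tau> *\<^sub>R (Fh (em_iter Z Fh \<alpha> \<gamma> \<tau> z0 w k) (w k)
                   - Fh (em_iter Z Fh \<alpha> \<gamma> \<tau> z0 w (k - 1)) (w (k - 1))))"

end

theory Submission
  imports Defs
begin

text \<open>Along every sample path, the variational inequality of the projection, the polarization
  identity and two Young inequalities bound the left-hand side by the right-hand side plus
  4\<tau>^2 |\<epsilon>_k|^2 + 4\<tau>^2 |\<epsilon>_(k-1)|^2 + \<alpha> (|\<epsilon>_(k+1)| - \<delta>) |z^(k+1) - z*| + \<alpha> \<delta>^2 / (2\<mu>),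
  where \<epsilon>_j is the oracle error at z^j. Since z^(k+1) depends only on the samples before
  \<xi>^(k+1), Fubini on the product of samples bounds the expected bias term by 0, and each
  squared error has expectation at most \<sigma>^2. Square integrability of the iterates, needed
  to split the expectation, follows inductively from nonexpansiveness of the projection and
  the Lipschitz continuity of F.\<close>

lemma inner_le_half_sum_squares:
  fixes x y :: "'a::real_inner"
  shows "x \<bullet> y \<le> ((norm x)\<^sup>2 + (norm y)\<^sup>2) / 2"
proof -
  have "x \<bullet> y \<le> norm x * norm y"
    by (rule Cauchy_Schwarz_ineq2[THEN abs_le_D1])
  also have "\<dots> \<le> ((norm x)\<^sup>2 + (norm y)\<^sup>2) / 2"
    using sum_squares_bound[of "norm x" "norm y"] by simp
  finally show ?thesis .
qed

lemma neg_inner_le_quarter_plus_square: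
  fixes q t :: "'a::real_inner"
  shows "- (\<tau> * (q \<bullet> t)) \<le> (norm t)\<^sup>2 / 4 + \<tau>\<^sup>2 * (norm q)\<^sup>2"
proof -
  have "0 \<le> (norm ((1/2) *\<^sub>R t + \<tau> *\<^sub>R q))\<^sup>2" by simp
  also have "\<dots> = (norm t)\<^sup>2 / 4 + \<tau> * (q \<bullet> t) + \<tau>\<^sup>2 * (norm q)\<^sup>2"
    by (simp only: power2_norm_eq_inner)
      (simp add: inner_add_left inner_add_right inner_commute power2_eq_square algebra_simps)
  finally show ?thesis by simp
qed

lemma norm_add3_squared_le:
  fixes a b c :: "'a::real_normed_vector"
  shows "(norm (a + b + c))\<^sup>2 \<le> 2 * (norm b)\<^sup>2 + 4 * (norm a)\<^sup>2 + 4 * (norm c)\<^sup>2"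
proof -
  have "norm (a + b + c) \<le> norm b + (norm a + norm c)"
    using norm_triangle_ineq[of "a + b" c] norm_triangle_ineq[of a b] by linarith
  then have "(norm (a + b + c))\<^sup>2 \<le> (norm b + (norm a + norm c))\<^sup>2"
    by (intro power_mono) auto
  also have "\<dots> \<le> 2 * (norm b)\<^sup>2 + 2 * (norm a + norm c)\<^sup>2"
    using sum_squares_bound[of "norm b" "norm a + norm c"] by (simp add: power2_sum)
  also have "(norm a + norm c)\<^sup>2 \<le> 2 * (norm a)\<^sup>2 + 2 * (norm c)\<^sup>2"
    using sum_squares_bound[of "norm a" "norm c"] by (simp add: power2_sum)
  finally show ?thesis by simp
qed

lemma noisy_difference_sq_le:
  fixes g gp f fp z zp :: "'a::real_normed_vector"
  assumes "norm (f - fp) \<le> L * norm (z - zp)"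
  shows "(norm (g - gp))\<^sup>2 \<le> 2 * L\<^sup>2 * (norm (z - zp))\<^sup>2 + 4 * (norm (g - f))\<^sup>2 + 4 * (norm (gp - fp))\<^sup>2"
proof -
  have "(norm (f - fp))\<^sup>2 \<le> (L * norm (z - zp))\<^sup>2"
    using assms norm_ge_zero by (intro power_mono) auto
  moreover have "g - gp = (g - f) + (f - fp) + (fp - gp)" by simp
  ultimately show ?thesis
    using norm_add3_squared_le[of "g - f" "f - fp" "fp - gp"]
    by (simp add: power_mult_distrib norm_minus_commute)
qed

lemma mult_minus_half_square_le:
  fixes \<mu> \<delta> r :: real
  assumes "0 < \<mu>"
  shows "\<delta> * r - \<mu> / 2 * r\<^sup>2 \<le> \<delta>\<^sup>2 / (2 * \<mu>)"
proof -
  have "0 \<le> (\<mu> * r - \<delta>)\<^sup>2 / (2 * \<mu>)" using assms by simp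
  also have "\<dots> = \<mu> / 2 * r\<^sup>2 - \<delta> * r + \<delta>\<^sup>2 / (2 * \<mu>)"
    using assms by (simp add: power2_diff field_simps power2_eq_square)
  finally show ?thesis by simp
qed

lemma extra_momentum_step_inequality:
  fixes z z' zp x g g' gp f f' fp :: "'a::real_inner"
  assumes proj: "(z - \<alpha> *\<^sub>R g + \<gamma> *\<^sub>R (z - zp) - \<tau> *\<^sub>R (g - gp) - z') \<bullet> (x - z') \<le> 0"
    and strong: "\<mu> * (norm (z' - x))\<^sup>2 \<le> f' \<bullet> (z' - x)"
    and lip: "norm (f - fp) \<le> L * norm (z - zp)"
    and pos: "0 < \<mu>" "0 \<le> \<alpha>" "0 \<le> \<gamma>" "0 \<le> \<tau>" "0 \<le> L"
  shows "(1/2 + \<alpha> * \<mu> / 2 - \<gamma> / 2) * (norm (z' - x))\<^sup>2 + \<alpha> * ((z' - x) \<bullet> (g - g'))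
           + 1/4 * (norm (z' - z))\<^sup>2
         \<le> 1/2 * (norm (z - x))\<^sup>2 + \<tau> * ((z - x) \<bullet> (gp - g))
           + (2 * \<tau>\<^sup>2 * L\<^sup>2 + \<gamma> / 2) * (norm (z - zp))\<^sup>2
           + 4 * \<tau>\<^sup>2 * (norm (g - f))\<^sup>2 + 4 * \<tau>\<^sup>2 * (norm (gp - fp))\<^sup>2
           + \<alpha> * (norm (g' - f') * norm (z' - x) - \<delta> * norm (z' - x)) + \<alpha> * \<delta>\<^sup>2 / (2 * \<mu>)"
proof -
  define d e t p q where "d = z' - x" and "e = z - x" and "t = z' - z" and "p = z - zp"
    and "q = g - gp"
  have variational: "t \<bullet> d + \<alpha> * (g \<bullet> d) - \<gamma> * (p \<bullet> d) + \<tau> * (q \<bullet> d) \<le> 0"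
  proof -
    have "z - \<alpha> *\<^sub>R g + \<gamma> *\<^sub>R (z - zp) - \<tau> *\<^sub>R (g - gp) - z'
        = - (t + \<alpha> *\<^sub>R g - \<gamma> *\<^sub>R p + \<tau> *\<^sub>R q)" "x - z' = - d"
      by (simp_all add: d_def t_def p_def q_def algebra_simps)
    with proj show ?thesis by (simp add: inner_add_left inner_diff_left)
  qed
  have polarization: "2 * (t \<bullet> d) = (norm d)\<^sup>2 - (norm e)\<^sup>2 + (norm t)\<^sup>2"
  proof -
    have "e = d - t" by (simp add: d_def e_def t_def)
    then show ?thesis
      by (simp add: power2_norm_eq_inner inner_diff_left inner_diff_right inner_commute)
  qed
  have momentum: "\<gamma> * (p \<bullet> d) \<le> \<gamma> / 2 * (norm p)\<^sup>2 + \<gamma> / 2 * (norm d)\<^sup>2"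
    using mult_left_mono[OF inner_le_half_sum_squares[of p d] pos(3)] by (simp add: field_simps)
  have split_q: "q \<bullet> d = q \<bullet> e + q \<bullet> t"
    by (simp add: d_def e_def t_def inner_diff_right flip: inner_add_right)
  have young: "- (\<tau> * (q \<bullet> t)) \<le> (norm t)\<^sup>2 / 4 + \<tau>\<^sup>2 * (norm q)\<^sup>2"
    by (rule neg_inner_le_quarter_plus_square)
  from mult_left_mono[OF noisy_difference_sq_le[OF lip, where g=g and gp=gp], of "\<tau>\<^sup>2"]
  have lipschitz: "\<tau>\<^sup>2 * (norm q)\<^sup>2
      \<le> 2 * \<tau>\<^sup>2 * L\<^sup>2 * (norm p)\<^sup>2 + 4 * \<tau>\<^sup>2 * (norm (g - f))\<^sup>2 + 4 * \<tau>\<^sup>2 * (norm (gp - fp))\<^sup>2"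
    by (simp add: algebra_simps p_def q_def)
  have "g \<bullet> d = (g - g') \<bullet> d + (g' - f') \<bullet> d + f' \<bullet> d"
    by (simp add: inner_diff_left)
  moreover have "- (norm (g' - f') * norm d) \<le> (g' - f') \<bullet> d"
    using Cauchy_Schwarz_ineq2[of "g' - f'" d] by linarith
  ultimately have "(g - g') \<bullet> d - norm (g' - f') * norm d + \<mu> * (norm d)\<^sup>2 \<le> g \<bullet> d"
    using strong by (simp add: d_def)
  from mult_left_mono[OF this pos(2)] have monotonicity:
    "\<alpha> * ((g - g') \<bullet> d) - \<alpha> * (norm (g' - f') * norm d) + \<alpha> * \<mu> * (norm d)\<^sup>2 \<le> \<alpha> * (g \<bullet> d)"
    by (simp add: algebra_simps)
  have bias: "\<alpha> * \<delta> * norm d - \<alpha> * \<mu> / 2 * (norm d)\<^sup>2 \<le> \<alpha> * \<delta>\<^sup>2 / (2 * \<mu>)"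
    using mult_left_mono[OF mult_minus_half_square_le[OF pos(1), of \<delta> "norm d"] pos(2)]
    by (simp add: algebra_simps)
  have eqs: "d \<bullet> (g - g') = (g - g') \<bullet> d" "e \<bullet> (gp - g) = - (q \<bullet> e)"
    by (simp_all add: d_def e_def q_def inner_commute inner_diff_right)
  have expand: "(1/2 + \<alpha> * \<mu> / 2 - \<gamma> / 2) * (norm d)\<^sup>2
      = 1/2 * (norm d)\<^sup>2 + \<alpha> * \<mu> / 2 * (norm d)\<^sup>2 - \<gamma> / 2 * (norm d)\<^sup>2"
    "(2 * \<tau>\<^sup>2 * L\<^sup>2 + \<gamma> / 2) * (norm p)\<^sup>2 = 2 * \<tau>\<^sup>2 * L\<^sup>2 * (norm p)\<^sup>2 + \<gamma> / 2 * (norm p)\<^sup>2"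
    "\<alpha> * (norm (g' - f') * norm d - \<delta> * norm d) = \<alpha> * (norm (g' - f') * norm d) - \<alpha> * \<delta> * norm d"
    "\<alpha> * \<mu> * (norm d)\<^sup>2 = 2 * (\<alpha> * \<mu> / 2 * (norm d)\<^sup>2)"
    "\<tau> * (q \<bullet> d) = \<tau> * (q \<bullet> e) + \<tau> * (q \<bullet> t)"
    "\<tau> * (- (q \<bullet> e)) = - (\<tau> * (q \<bullet> e))"
    by (simp_all add: algebra_simps split_q)
  show ?thesis
    unfolding d_def[symmetric] e_def[symmetric] t_def[symmetric] p_def[symmetric] eqs
    using expand variational polarization momentum young lipschitz monotonicity bias
    by argo
qed

definition square_integrable :: "'a measure \<Rightarrow> ('a \<Rightarrow> 'b::euclidean_space) \<Rightarrow> bool" where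
  "square_integrable M f \<longleftrightarrow> f \<in> borel_measurable M \<and> integrable M (\<lambda>x. (norm (f x))\<^sup>2)"

lemma square_integrable_measurable: "square_integrable M f \<Longrightarrow> f \<in> borel_measurable M"
  by (simp add: square_integrable_def)

lemma square_integrable_integrable_norm_sq:
  "square_integrable M f \<Longrightarrow> integrable M (\<lambda>x. (norm (f x))\<^sup>2)"
  by (simp add: square_integrable_def)

lemma square_integrable_const: "finite_measure M \<Longrightarrow> square_integrable M (\<lambda>x. c)"
  by (simp add: square_integrable_def finite_measure.integrable_const)

lemma square_integrable_bound:
  assumes g: "square_integrable M g" and f: "f \<in> borel_measurable M"
    and le: "\<And>x. x \<in> space M \<Longrightarrow> norm (f x) \<le> norm (g x)"
  shows "square_integrable M f"
  unfolding square_integrable_def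
proof
  show "integrable M (\<lambda>x. (norm (f x))\<^sup>2)"
  proof (rule Bochner_Integration.integrable_bound[OF square_integrable_integrable_norm_sq[OF g]])
    show "(\<lambda>x. (norm (f x))\<^sup>2) \<in> borel_measurable M" using f by measurable
    show "AE x in M. norm ((norm (f x))\<^sup>2) \<le> norm ((norm (g x))\<^sup>2)"
    proof (rule AE_I2)
      fix x assume "x \<in> space M"
      with le have "(norm (f x))\<^sup>2 \<le> (norm (g x))\<^sup>2" by (intro power_mono) simp_all
      then show "norm ((norm (f x))\<^sup>2) \<le> norm ((norm (g x))\<^sup>2)" by simp
    qed
  qed
qed (rule f)

lemma square_integrable_add:
  assumes f: "square_integrable M f" and g: "square_integrable M g"
  shows "square_integrable M (\<lambda>x. f x + g x)"
  unfolding square_integrable_def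
proof
  have [measurable]: "f \<in> borel_measurable M" "g \<in> borel_measurable M"
    using f g by (simp_all add: square_integrable_measurable)
  show "(\<lambda>x. f x + g x) \<in> borel_measurable M" by measurable
  have "integrable M (\<lambda>x. 2 * (norm (g x))\<^sup>2 + 4 * (norm (f x))\<^sup>2)"
    using f g by (simp add: square_integrable_integrable_norm_sq)
  then show "integrable M (\<lambda>x. (norm (f x + g x))\<^sup>2)"
  proof (rule Bochner_Integration.integrable_bound)
    show "(\<lambda>x. (norm (f x + g x))\<^sup>2) \<in> borel_measurable M" by measurable
    show "AE x in M. norm ((norm (f x + g x))\<^sup>2) \<le> norm (2 * (norm (g x))\<^sup>2 + 4 * (norm (f x))\<^sup>2)"
    proof (rule AE_I2)
      fix x
      have "(norm (f x + g x))\<^sup>2 \<le> 2 * (norm (g x))\<^sup>2 + 4 * (norm (f x))\<^sup>2"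
        using norm_add3_squared_le[of "f x" "g x" 0] by simp
      then show "norm ((norm (f x + g x))\<^sup>2) \<le> norm (2 * (norm (g x))\<^sup>2 + 4 * (norm (f x))\<^sup>2)"
        by simp
    qed
  qed
qed

lemma square_integrable_scaleR:
  "square_integrable M f \<Longrightarrow> square_integrable M (\<lambda>x. c *\<^sub>R f x)"
  by (simp add: square_integrable_def power_mult_distrib borel_measurable_scaleR)

lemma square_integrable_diff:
  assumes "square_integrable M f" "square_integrable M g"
  shows "square_integrable M (\<lambda>x. f x - g x)"
  using square_integrable_add[OF assms(1) square_integrable_scaleR[OF assms(2), of "-1"]]
  by simp

lemma integrable_norm_mult_norm:
  assumes f: "square_integrable M f" and g: "square_integrable M g"
  shows "integrable M (\<lambda>x. norm (f x) * norm (g x))"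
proof (rule Bochner_Integration.integrable_bound)
  have [measurable]: "f \<in> borel_measurable M" "g \<in> borel_measurable M"
    using f g by (simp_all add: square_integrable_measurable)
  show "integrable M (\<lambda>x. (norm (f x))\<^sup>2 + (norm (g x))\<^sup>2)"
    using f g by (simp add: square_integrable_integrable_norm_sq)
  show "(\<lambda>x. norm (f x) * norm (g x)) \<in> borel_measurable M" by measurable
  show "AE x in M. norm (norm (f x) * norm (g x)) \<le> norm ((norm (f x))\<^sup>2 + (norm (g x))\<^sup>2)"
  proof (rule AE_I2)
    fix x
    have "0 \<le> norm (f x) * norm (g x)" by simp
    with sum_squares_bound[of "norm (f x)" "norm (g x)"]
    have "norm (f x) * norm (g x) \<le> (norm (f x))\<^sup>2 + (norm (g x))\<^sup>2" by linarith
    then show "norm (norm (f x) * norm (g x)) \<le> norm ((norm (f x))\<^sup>2 + (norm (g x))\<^sup>2)"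
      by simp
  qed
qed

lemma integrable_inner:
  assumes f: "square_integrable M f" and g: "square_integrable M g"
  shows "integrable M (\<lambda>x. f x \<bullet> g x)"
proof (rule Bochner_Integration.integrable_bound[OF integrable_norm_mult_norm[OF f g]])
  have [measurable]: "f \<in> borel_measurable M" "g \<in> borel_measurable M"
    using f g by (simp_all add: square_integrable_measurable)
  show "(\<lambda>x. f x \<bullet> g x) \<in> borel_measurable M" by measurable
  show "AE x in M. norm (f x \<bullet> g x) \<le> norm (norm (f x) * norm (g x))"
  proof (rule AE_I2)
    fix x
    show "norm (f x \<bullet> g x) \<le> norm (norm (f x) * norm (g x))"
      using Cauchy_Schwarz_ineq2[of "f x" "g x"] by simp
  qed
qed

lemma (in finite_measure) square_integrable_integrable_norm:
  assumes f: "square_integrable M f"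
  shows "integrable M (\<lambda>x. norm (f x))"
proof (rule square_integrable_imp_integrable)
  have [measurable]: "f \<in> borel_measurable M"
    using f by (rule square_integrable_measurable)
  show "(\<lambda>x. norm (f x)) \<in> borel_measurable M" by measurable
  show "integrable M (\<lambda>x. (norm (f x))\<^sup>2)"
    using f by (rule square_integrable_integrable_norm_sq)
qed

definition prefix_determined :: "nat \<Rightarrow> ((nat \<Rightarrow> 'a) \<Rightarrow> 'b) \<Rightarrow> bool" where
  "prefix_determined j f \<longleftrightarrow> (\<forall>w w'. (\<forall>i<j. w i = w' i) \<longrightarrow> f w = f w')"

text \<open>A fresh sample w j is independent of everything determined by w 0, ..., w (j - 1):
  splitting the sequence at j with comb_seq turns the expectation into an iterated integral.\<close>

lemma (in sequence_space) nn_integral_mult_fresh_sample_le: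
  fixes g :: "(nat \<Rightarrow> 'a) \<Rightarrow> ennreal" and h :: "'b \<Rightarrow> 'a \<Rightarrow> ennreal"
  assumes u: "u \<in> measurable S N" "prefix_determined j u" "\<And>w. u w \<in> A"
    and g: "g \<in> borel_measurable S" "prefix_determined j g"
    and h: "case_prod h \<in> borel_measurable (N \<Otimes>\<^sub>M M)" "\<And>x. x \<in> A \<Longrightarrow> (\<integral>\<^sup>+ \<xi>. h x \<xi> \<partial>M) \<le> c"
  shows "(\<integral>\<^sup>+ w. g w * h (u w) (w j) \<partial>S) \<le> (\<integral>\<^sup>+ w. g w \<partial>S) * c"
proof -
  define f where "f w = g w * h (u w) (w j)" for w
  have h_section: "h x \<in> borel_measurable M" if "x \<in> space N" for x
    using measurable_Pair2[OF h(1) that] by simp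
  have "(\<lambda>w. (u w, w j)) \<in> measurable S (N \<Otimes>\<^sub>M M)"
    using u(1) by (intro measurable_Pair) (auto intro!: measurable_component_singleton)
  from measurable_compose[OF this h(1)] g(1) have f_meas: "f \<in> borel_measurable S"
    unfolding f_def by simp
  let ?c = "\<lambda>(\<omega>, \<omega>'). comb_seq j \<omega> \<omega>'"
  have "(\<integral>\<^sup>+ w. f w \<partial>S) = (\<integral>\<^sup>+ w. f w \<partial>distr (S \<Otimes>\<^sub>M S) S ?c)"
    by (simp only: PiM_comb_seq)
  also have "\<dots> = (\<integral>\<^sup>+ p. f (?c p) \<partial>(S \<Otimes>\<^sub>M S))"
    by (rule nn_integral_distr[OF measurable_comb_seq]) (simp add: f_meas)
  also have "\<dots> = (\<integral>\<^sup>+ \<omega>. \<integral>\<^sup>+ \<omega>'. f (comb_seq j \<omega> \<omega>') \<partial>S \<partial>S)"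
    using nn_integral_fst[OF measurable_compose[OF measurable_comb_seq f_meas]] by simp
  also have "\<dots> = (\<integral>\<^sup>+ \<omega>. g \<omega> * \<integral>\<^sup>+ \<omega>'. h (u \<omega>) (\<omega>' 0) \<partial>S \<partial>S)"
  proof (intro nn_integral_cong)
    fix \<omega> assume "\<omega> \<in> space S"
    then have "u \<omega> \<in> space N" by (rule measurable_space[OF u(1)])
    have "f (comb_seq j \<omega> \<omega>') = g \<omega> * h (u \<omega>) (\<omega>' 0)" for \<omega>'
    proof -
      have "\<forall>i<j. comb_seq j \<omega> \<omega>' i = \<omega> i" by (simp add: comb_seq_less)
      then have "u (comb_seq j \<omega> \<omega>') = u \<omega>" "g (comb_seq j \<omega> \<omega>') = g \<omega>"
        using u(2) g(2) unfolding prefix_determined_def by blast+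
      then show ?thesis using comb_seq_add[of j \<omega> \<omega>' 0] by (simp add: f_def)
    qed
    then show "(\<integral>\<^sup>+ \<omega>'. f (comb_seq j \<omega> \<omega>') \<partial>S) = g \<omega> * \<integral>\<^sup>+ \<omega>'. h (u \<omega>) (\<omega>' 0) \<partial>S"
      using h_section[OF \<open>u \<omega> \<in> space N\<close>]
      by (simp add: nn_integral_cmult measurable_component_singleton)
  qed
  also have "\<dots> = (\<integral>\<^sup>+ \<omega>. g \<omega> * \<integral>\<^sup>+ \<xi>. h (u \<omega>) \<xi> \<partial>M \<partial>S)"
  proof (intro nn_integral_cong arg_cong2[where f="(*)"] refl)
    fix \<omega> assume "\<omega> \<in> space S"
    then have "u \<omega> \<in> space N" by (rule measurable_space[OF u(1)])
    have "(\<integral>\<^sup>+ \<xi>. h (u \<omega>) \<xi> \<partial>M) = (\<integral>\<^sup>+ \<xi>. h (u \<omega>) \<xi> \<partial>distr S M (\<lambda>\<omega>. \<omega> 0))"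
      by (simp add: PiM_component)
    also have "\<dots> = (\<integral>\<^sup>+ \<omega>'. h (u \<omega>) (\<omega>' 0) \<partial>S)"
      by (rule nn_integral_distr)
        (auto intro!: measurable_component_singleton h_section[OF \<open>u \<omega> \<in> space N\<close>])
    finally show "(\<integral>\<^sup>+ \<omega>'. h (u \<omega>) (\<omega>' 0) \<partial>S) = (\<integral>\<^sup>+ \<xi>. h (u \<omega>) \<xi> \<partial>M)" ..
  qed
  also have "\<dots> \<le> (\<integral>\<^sup>+ \<omega>. g \<omega> * c \<partial>S)"
    by (intro nn_integral_mono mult_left_mono h(2) u(3)) simp
  also have "\<dots> = (\<integral>\<^sup>+ w. g w \<partial>S) * c"
    using g(1) by (rule nn_integral_multc)
  finally show ?thesis unfolding f_def .
qed

locale stochastic_extra_momentum =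
  fixes Z :: "'a::euclidean_space set"
    and F :: "'a \<Rightarrow> 'a"
    and D :: "'x measure"
    and Fh :: "'a \<Rightarrow> 'x \<Rightarrow> 'a"
    and \<mu> L \<delta> \<sigma> \<alpha> \<gamma> \<tau> :: real
    and zs z0 :: 'a
  assumes Z: "Z \<noteq> {}" "closed Z" "convex Z"
    and mono: "\<And>z z'. z \<in> Z \<Longrightarrow> z' \<in> Z \<Longrightarrow> (F z - F z') \<bullet> (z - z') \<ge> \<mu> * (norm (z - z'))\<^sup>2"
    and lip: "\<And>z z'. z \<in> Z \<Longrightarrow> z' \<in> Z \<Longrightarrow> norm (F z - F z') \<le> L * norm (z - z')"
    and muL: "0 < \<mu>" "\<mu> \<le> L"
    and zs: "zs \<in> Z" "\<And>z. z \<in> Z \<Longrightarrow> F zs \<bullet> (z - zs) \<ge> 0"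
    and D: "prob_space D"
    and Fh_meas: "(\<lambda>(z, \<xi>). Fh z \<xi>) \<in> borel_measurable (borel \<Otimes>\<^sub>M D)"
    and bias: "\<And>z. z \<in> Z \<Longrightarrow> (\<integral>\<^sup>+ \<xi>. ennreal (norm (Fh z \<xi> - F z)) \<partial>D) \<le> ennreal \<delta>"
    and var: "\<And>z. z \<in> Z \<Longrightarrow> (\<integral>\<^sup>+ \<xi>. ennreal ((norm (Fh z \<xi> - F z))\<^sup>2) \<partial>D) \<le> ennreal (\<sigma>\<^sup>2)"
    and ds: "0 \<le> \<delta>" "0 \<le> \<sigma>"
    and params: "0 \<le> \<alpha>" "0 \<le> \<gamma>" "0 \<le> \<tau>"
    and z0: "z0 \<in> Z"
begin

sublocale samples: sequence_space D
  by (simp add: sequence_space_def product_prob_space_def product_prob_space_axioms_def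
      product_sigma_finite_def D prob_space_imp_sigma_finite)

abbreviation S :: "(nat \<Rightarrow> 'x) measure" where
  "S \<equiv> \<Pi>\<^sub>M i\<in>UNIV. D"

definition z :: "nat \<Rightarrow> (nat \<Rightarrow> 'x) \<Rightarrow> 'a" where
  "z j w = em_iter Z Fh \<alpha> \<gamma> \<tau> z0 w j"

definition Fz :: "nat \<Rightarrow> (nat \<Rightarrow> 'x) \<Rightarrow> 'a" where
  "Fz j w = Fh (z j w) (w j)"

text \<open>F is only controlled on Z; precomposing with the projection gives a continuous,
  hence Borel measurable, map on the whole space that agrees with F on Z.\<close>

definition F_ext :: "'a \<Rightarrow> 'a" where
  "F_ext = F \<circ> closest_point Z"

definition noise :: "nat \<Rightarrow> (nat \<Rightarrow> 'x) \<Rightarrow> 'a" where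
  "noise j w = Fz j w - F_ext (z j w)"

lemma z_in_Z: "z j w \<in> Z"
  by (cases j) (auto simp: z_def z0 closest_point_in_set Z)

lemma z_Suc: "z (Suc k) w = closest_point Z
    (z k w - \<alpha> *\<^sub>R Fz k w + \<gamma> *\<^sub>R (z k w - z (k - 1) w) - \<tau> *\<^sub>R (Fz k w - Fz (k - 1) w))"
  by (simp add: z_def Fz_def)

lemma F_ext_eq: "x \<in> Z \<Longrightarrow> F_ext x = F x"
  by (simp add: F_ext_def closest_point_self)

lemma borel_measurable_closest_point[measurable]: "closest_point Z \<in> borel_measurable borel"
  by (rule borel_measurable_continuous_onI[OF continuous_on_closest_point[OF Z(3,2,1)]])

lemma borel_measurable_F_ext[measurable]: "F_ext \<in> borel_measurable borel"
proof (rule borel_measurable_continuous_onI)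
  have "L-lipschitz_on Z F"
    using lip muL by (intro lipschitz_onI) (auto simp: dist_norm)
  then have "continuous_on Z F" by (rule lipschitz_on_continuous_on)
  moreover have "range (closest_point Z) \<subseteq> Z"
    using closest_point_in_set Z by blast
  ultimately show "continuous_on UNIV F_ext"
    unfolding F_ext_def
    by (intro continuous_on_compose continuous_on_closest_point Z) (rule continuous_on_subset)
qed

lemma borel_measurable_oracle:
  assumes "u \<in> borel_measurable S"
  shows "(\<lambda>w. Fh (u w) (w j)) \<in> borel_measurable S"
proof -
  have "(\<lambda>w. (u w, w j)) \<in> measurable S (borel \<Otimes>\<^sub>M D)"
    using assms by (intro measurable_Pair) (auto intro!: measurable_component_singleton)
  from measurable_compose[OF this Fh_meas] show ?thesis by simp
qed

lemma borel_measurable_z[measurable]: "z j \<in> borel_measurable S"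
proof (induction j rule: less_induct)
  case (less j)
  show ?case
  proof (cases j)
    case 0
    then show ?thesis by (simp add: z_def[abs_def])
  next
    case (Suc k)
    then have [measurable]: "z k \<in> borel_measurable S" "z (k - 1) \<in> borel_measurable S"
      using less by auto
    have [measurable]: "Fz k \<in> borel_measurable S" "Fz (k - 1) \<in> borel_measurable S"
      unfolding Fz_def[abs_def] by (intro borel_measurable_oracle; measurable)+
    show ?thesis unfolding Suc z_Suc[abs_def] by measurable
  qed
qed

lemma borel_measurable_Fz[measurable]: "Fz j \<in> borel_measurable S"
  unfolding Fz_def[abs_def] by (simp add: borel_measurable_oracle)

lemma borel_measurable_noise[measurable]: "noise j \<in> borel_measurable S"
  unfolding noise_def[abs_def] by measurable

lemma prefix_determined_z: "prefix_determined j (z j)"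
  unfolding prefix_determined_def
proof (induction j rule: less_induct)
  case (less j)
  show ?case
  proof (intro allI impI)
    fix w w' :: "nat \<Rightarrow> 'x"
    assume agree: "\<forall>i<j. w i = w' i"
    show "z j w = z j w'"
    proof (cases j)
      case 0
      then show ?thesis by (simp add: z_def)
    next
      case (Suc k)
      with less agree have "z k w = z k w'" "z (k - 1) w = z (k - 1) w'"
        "w k = w' k" "w (k - 1) = w' (k - 1)"
        by auto
      then show ?thesis by (simp add: Suc z_Suc Fz_def)
    qed
  qed
qed

lemma nn_integral_mult_noise_le:
  fixes g :: "(nat \<Rightarrow> 'x) \<Rightarrow> ennreal"
  assumes g: "g \<in> borel_measurable S" "prefix_determined j g"
  shows "(\<integral>\<^sup>+ w. g w * ennreal (norm (noise j w)) \<partial>S) \<le> (\<integral>\<^sup>+ w. g w \<partial>S) * ennreal \<delta>"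
    and "(\<integral>\<^sup>+ w. g w * ennreal ((norm (noise j w))\<^sup>2) \<partial>S) \<le> (\<integral>\<^sup>+ w. g w \<partial>S) * ennreal (\<sigma>\<^sup>2)"
proof -
  have [measurable]: "(\<lambda>p. Fh (fst p) (snd p)) \<in> borel_measurable (borel \<Otimes>\<^sub>M D)"
    using Fh_meas by (simp add: split_beta')
  have u: "z j \<in> borel_measurable S" "prefix_determined j (z j)" "\<And>w. z j w \<in> Z"
    by (simp_all add: prefix_determined_z z_in_Z)
  have noise_eq: "noise j w = Fh (z j w) (w j) - F_ext (z j w)" for w
    by (simp add: noise_def Fz_def)
  show "(\<integral>\<^sup>+ w. g w * ennreal (norm (noise j w)) \<partial>S) \<le> (\<integral>\<^sup>+ w. g w \<partial>S) * ennreal \<delta>"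
    unfolding noise_eq
    by (rule samples.nn_integral_mult_fresh_sample_le[OF u g,
          where h="\<lambda>x \<xi>. ennreal (norm (Fh x \<xi> - F_ext x))"])
      (simp_all add: split_beta' bias F_ext_eq)
  show "(\<integral>\<^sup>+ w. g w * ennreal ((norm (noise j w))\<^sup>2) \<partial>S) \<le> (\<integral>\<^sup>+ w. g w \<partial>S) * ennreal (\<sigma>\<^sup>2)"
    unfolding noise_eq
    by (rule samples.nn_integral_mult_fresh_sample_le[OF u g,
          where h="\<lambda>x \<xi>. ennreal ((norm (Fh x \<xi> - F_ext x))\<^sup>2)"])
      (simp_all add: split_beta' var F_ext_eq)
qed

lemma nn_integral_norm_noise_sq_le: "(\<integral>\<^sup>+ w. ennreal ((norm (noise j w))\<^sup>2) \<partial>S) \<le> ennreal (\<sigma>\<^sup>2)"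
  using nn_integral_mult_noise_le(2)[of "\<lambda>_. 1" j]
  by (simp add: prefix_determined_def samples.P.emeasure_space_1)

lemma square_integrable_noise: "square_integrable S (noise j)"
  unfolding square_integrable_def
proof
  show "integrable S (\<lambda>w. (norm (noise j w))\<^sup>2)"
  proof (rule integrableI_bounded)
    have "(\<integral>\<^sup>+ w. ennreal (norm ((norm (noise j w))\<^sup>2)) \<partial>S) \<le> ennreal (\<sigma>\<^sup>2)"
      using nn_integral_norm_noise_sq_le[of j] by simp
    then show "(\<integral>\<^sup>+ w. ennreal (norm ((norm (noise j w))\<^sup>2)) \<partial>S) < \<infinity>"
      using le_less_trans by fastforce
  qed simp
qed simp

lemma square_integrable_Fz:
  assumes z: "square_integrable S (\<lambda>w. z j w - zs)"
  shows "square_integrable S (Fz j)"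
proof -
  have "square_integrable S (\<lambda>w. F_ext (z j w) - F zs)"
  proof (rule square_integrable_bound[OF square_integrable_scaleR[OF z, of L]])
    fix w
    have "norm (F_ext (z j w) - F zs) \<le> L * norm (z j w - zs)"
      using lip[OF z_in_Z zs(1)] F_ext_eq[OF z_in_Z] by simp
    then show "norm (F_ext (z j w) - F zs) \<le> norm (L *\<^sub>R (z j w - zs))"
      using muL by simp
  qed measurable
  then have "square_integrable S (\<lambda>w. noise j w + ((F_ext (z j w) - F zs) + F zs))"
    by (intro square_integrable_add square_integrable_noise square_integrable_const)
      (simp_all add: samples.P.finite_measure_axioms)
  then show ?thesis
    by (simp add: noise_def)
qed

text \<open>The projection is nonexpansive and fixes zs, so each iterate is dominated by an
  affine combination of earlier iterates and oracle values.\<close>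

lemma square_integrable_z: "square_integrable S (\<lambda>w. z j w - zs)"
proof (induction j rule: less_induct)
  case (less j)
  show ?case
  proof (cases j)
    case 0
    then show ?thesis
      by (simp add: z_def square_integrable_const samples.P.finite_measure_axioms)
  next
    case (Suc k)
    with less have z: "square_integrable S (\<lambda>w. z k w - zs)"
        "square_integrable S (\<lambda>w. z (k - 1) w - zs)"
      by auto
    then have Fz: "square_integrable S (Fz k)" "square_integrable S (Fz (k - 1))"
      by (simp_all add: square_integrable_Fz)
    define y where "y w = z k w - \<alpha> *\<^sub>R Fz k w + \<gamma> *\<^sub>R (z k w - z (k - 1) w)
      - \<tau> *\<^sub>R (Fz k w - Fz (k - 1) w)" for w
    have "y w - zs = (z k w - zs) - \<alpha> *\<^sub>R Fz k w + \<gamma> *\<^sub>R ((z k w - zs) - (z (k - 1) w - zs))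
       - \<tau> *\<^sub>R (Fz k w - Fz (k - 1) w)" for w
      by (simp add: y_def algebra_simps)
    then have y: "square_integrable S (\<lambda>w. y w - zs)"
      by (simp only:) (intro square_integrable_add square_integrable_diff square_integrable_scaleR z Fz)
    show ?thesis
    proof (rule square_integrable_bound[OF y])
      fix w
      have "dist (closest_point Z (y w)) (closest_point Z zs) \<le> dist (y w) zs"
        by (rule closest_point_lipschitz[OF Z(3,2,1)])
      then show "norm (z j w - zs) \<le> norm (y w - zs)"
        by (simp add: Suc z_Suc y_def closest_point_self[OF zs(1)] dist_norm)
    qed measurable
  qed
qed

lemma one_step_pointwise:
  "(1/2 + \<alpha> * \<mu> / 2 - \<gamma> / 2) * (norm (z (Suc k) w - zs))\<^sup>2
     + \<alpha> * ((z (Suc k) w - zs) \<bullet> (Fz k w - Fz (Suc k) w))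
     + 1/4 * (norm (z (Suc k) w - z k w))\<^sup>2
   \<le> 1/2 * (norm (z k w - zs))\<^sup>2 + \<tau> * ((z k w - zs) \<bullet> (Fz (k - 1) w - Fz k w))
     + (2 * \<tau>\<^sup>2 * L\<^sup>2 + \<gamma> / 2) * (norm (z k w - z (k - 1) w))\<^sup>2
     + 4 * \<tau>\<^sup>2 * (norm (noise k w))\<^sup>2 + 4 * \<tau>\<^sup>2 * (norm (noise (k - 1) w))\<^sup>2
     + \<alpha> * (norm (noise (Suc k) w) * norm (z (Suc k) w - zs) - \<delta> * norm (z (Suc k) w - zs))
     + \<alpha> * \<delta>\<^sup>2 / (2 * \<mu>)"
proof -
  have proj: "(z k w - \<alpha> *\<^sub>R Fz k w + \<gamma> *\<^sub>R (z k w - z (k - 1) w) - \<tau> *\<^sub>R (Fz k w - Fz (k - 1) w)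
      - z (Suc k) w) \<bullet> (zs - z (Suc k) w) \<le> 0"
    unfolding z_Suc by (rule closest_point_dot[OF Z(3,2) zs(1)])
  have strong: "\<mu> * (norm (z (Suc k) w - zs))\<^sup>2 \<le> F_ext (z (Suc k) w) \<bullet> (z (Suc k) w - zs)"
    using mono[OF z_in_Z zs(1)] zs(2)[OF z_in_Z] F_ext_eq[OF z_in_Z]
    by (simp add: inner_diff_left) (smt (verit))
  have lipschitz: "norm (F_ext (z k w) - F_ext (z (k - 1) w)) \<le> L * norm (z k w - z (k - 1) w)"
    using lip[OF z_in_Z z_in_Z] F_ext_eq[OF z_in_Z] by simp
  have "0 \<le> L" using muL by simp
  from extra_momentum_step_inequality[OF proj strong lipschitz muL(1) params this]
  show ?thesis unfolding noise_def .
qed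

lemma expectation_norm_noise_sq_le: "(\<integral>w. (norm (noise j w))\<^sup>2 \<partial>S) \<le> \<sigma>\<^sup>2"
  by (rule integral_real_bounded) (simp_all add: nn_integral_norm_noise_sq_le)

lemma expectation_norm_noise_mult_le:
  "(\<integral>w. norm (noise j w) * norm (z j w - zs) \<partial>S) \<le> \<delta> * (\<integral>w. norm (z j w - zs) \<partial>S)"
proof -
  have z_int: "integrable S (\<lambda>w. norm (z j w - zs))"
    by (rule samples.P.square_integrable_integrable_norm[OF square_integrable_z])
  have "prefix_determined j (\<lambda>w. ennreal (norm (z j w - zs)))"
    using prefix_determined_z[of j] unfolding prefix_determined_def by metis
  from nn_integral_mult_noise_le(1)[OF _ this]
  have "(\<integral>\<^sup>+ w. ennreal (norm (noise j w) * norm (z j w - zs)) \<partial>S)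
      \<le> (\<integral>\<^sup>+ w. ennreal (norm (z j w - zs)) \<partial>S) * ennreal \<delta>"
    by (simp add: ennreal_mult' mult.commute)
  also have "\<dots> = ennreal (\<delta> * (\<integral>w. norm (z j w - zs) \<partial>S))"
    using ds z_int by (simp add: nn_integral_eq_integral ennreal_mult' mult.commute)
  finally show ?thesis
    using ds by (intro integral_real_bounded) (simp_all add: z_int)
qed

lemma one_step_expectation:
  "(\<integral>w. ((1/2 + \<alpha> * \<mu> / 2 - \<gamma> / 2) * (norm (z (Suc k) w - zs))\<^sup>2
     + \<alpha> * ((z (Suc k) w - zs) \<bullet> (Fz k w - Fz (Suc k) w))
     + 1/4 * (norm (z (Suc k) w - z k w))\<^sup>2) \<partial>S)
   \<le> (\<integral>w. (1/2 * (norm (z k w - zs))\<^sup>2 + \<tau> * ((z k w - zs) \<bullet> (Fz (k - 1) w - Fz k w))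
     + (2 * \<tau>\<^sup>2 * L\<^sup>2 + \<gamma> / 2) * (norm (z k w - z (k - 1) w))\<^sup>2) \<partial>S)
     + 8 * \<tau>\<^sup>2 * \<sigma>\<^sup>2 + \<alpha> * \<delta>\<^sup>2 / (2 * \<mu>)"
  (is "integral\<^sup>L S ?L \<le> integral\<^sup>L S ?R + _ + _")
proof -
  let ?A = "\<lambda>w. (norm (noise k w))\<^sup>2" and ?B = "\<lambda>w. (norm (noise (k - 1) w))\<^sup>2"
    and ?C = "\<lambda>w. norm (noise (Suc k) w) * norm (z (Suc k) w - zs)"
    and ?N = "\<lambda>w. norm (z (Suc k) w - zs)"
  let ?E = "\<lambda>w. 4 * \<tau>\<^sup>2 * ?A w + 4 * \<tau>\<^sup>2 * ?B w + \<alpha> * (?C w - \<delta> * ?N w) + \<alpha> * \<delta>\<^sup>2 / (2 * \<mu>)"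
  have z: "square_integrable S (\<lambda>w. z j w - zs)" for j
    by (rule square_integrable_z)
  have Fz: "square_integrable S (Fz j)" for j
    by (rule square_integrable_Fz[OF z])
  have "square_integrable S (\<lambda>w. (z (Suc k) w - zs) - (z k w - zs))"
    "square_integrable S (\<lambda>w. (z k w - zs) - (z (k - 1) w - zs))"
    by (intro square_integrable_diff z)+
  then have steps: "square_integrable S (\<lambda>w. z (Suc k) w - z k w)"
    "square_integrable S (\<lambda>w. z k w - z (k - 1) w)"
    by simp_all
  have L_int: "integrable S ?L" and R_int: "integrable S ?R"
    by (intro Bochner_Integration.integrable_add integrable_mult_right
        square_integrable_integrable_norm_sq integrable_inner z steps square_integrable_diff Fz)+
  have E_int: "integrable S ?E"
    by (intro Bochner_Integration.integrable_add Bochner_Integration.integrable_diff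
        integrable_mult_right square_integrable_integrable_norm_sq square_integrable_noise
        integrable_norm_mult_norm z samples.P.square_integrable_integrable_norm
        samples.P.integrable_const)
  have "integral\<^sup>L S ?L \<le> (\<integral>w. ?R w + ?E w \<partial>S)"
  proof (rule integral_mono[OF L_int Bochner_Integration.integrable_add[OF R_int E_int]])
    show "?L w \<le> ?R w + ?E w" for w
      using one_step_pointwise[of k w] by linarith
  qed
  also have "\<dots> = integral\<^sup>L S ?R + integral\<^sup>L S ?E"
    by (rule Bochner_Integration.integral_add[OF R_int E_int])
  also have "integral\<^sup>L S ?E = 4 * \<tau>\<^sup>2 * integral\<^sup>L S ?A + 4 * \<tau>\<^sup>2 * integral\<^sup>L S ?B
      + \<alpha> * (integral\<^sup>L S ?C - \<delta> * integral\<^sup>L S ?N) + \<alpha> * \<delta>\<^sup>2 / (2 * \<mu>)"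
    by (simp add: square_integrable_integrable_norm_sq[OF square_integrable_noise]
        integrable_norm_mult_norm[OF square_integrable_noise z]
        samples.P.square_integrable_integrable_norm[OF z] samples.P.prob_space)
  also have "\<dots> \<le> 8 * \<tau>\<^sup>2 * \<sigma>\<^sup>2 + \<alpha> * \<delta>\<^sup>2 / (2 * \<mu>)"
  proof -
    have "4 * \<tau>\<^sup>2 * integral\<^sup>L S ?A \<le> 4 * \<tau>\<^sup>2 * \<sigma>\<^sup>2" "4 * \<tau>\<^sup>2 * integral\<^sup>L S ?B \<le> 4 * \<tau>\<^sup>2 * \<sigma>\<^sup>2"
      by (intro mult_left_mono expectation_norm_noise_sq_le; simp)+
    moreover have "\<alpha> * (integral\<^sup>L S ?C - \<delta> * integral\<^sup>L S ?N) \<le> 0"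
      using expectation_norm_noise_mult_le[of "Suc k"] params(1) by (simp add: mult_nonneg_nonpos)
    ultimately show ?thesis by linarith
  qed
  finally show ?thesis by linarith
qed

end

theorem lemma2:
  fixes Z :: "'a::euclidean_space set"
    and F :: "'a \<Rightarrow> 'a"
    and D :: "'x measure"
    and Fh :: "'a \<Rightarrow> 'x \<Rightarrow> 'a"
    and \<mu> L \<delta> \<sigma> \<alpha> \<gamma> \<tau> :: real
    and zs z0 :: 'a
    and k :: nat
  assumes Z: "Z \<noteq> {}" "closed Z" "convex Z"
    and mono: "\<And>z z'. z \<in> Z \<Longrightarrow> z' \<in> Z \<Longrightarrow> (F z - F z') \<bullet> (z - z') \<ge> \<mu> * (norm (z - z'))\<^sup>2"
    and lip: "\<And>z z'. z \<in> Z \<Longrightarrow> z' \<in> Z \<Longrightarrow> norm (F z - F z') \<le> L * norm (z - z')"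
    and muL: "0 < \<mu>" "\<mu> \<le> L"
    and zs: "zs \<in> Z" "\<And>z. z \<in> Z \<Longrightarrow> F zs \<bullet> (z - zs) \<ge> 0"
    and D: "prob_space D"
    and Fh_meas: "(\<lambda>(z, \<xi>). Fh z \<xi>) \<in> borel_measurable (borel \<Otimes>\<^sub>M D)"
    and bias: "\<And>z. z \<in> Z \<Longrightarrow> (\<integral>\<^sup>+ \<xi>. ennreal (norm (Fh z \<xi> - F z)) \<partial>D) \<le> ennreal \<delta>"
    and var: "\<And>z. z \<in> Z \<Longrightarrow> (\<integral>\<^sup>+ \<xi>. ennreal ((norm (Fh z \<xi> - F z))\<^sup>2) \<partial>D) \<le> ennreal (\<sigma>\<^sup>2)"
    and ds: "0 \<le> \<delta>" "0 \<le> \<sigma>"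
    and params: "0 \<le> \<alpha>" "0 \<le> \<gamma>" "0 \<le> \<tau>"
    and z0: "z0 \<in> Z"
  shows
    "(let M = (\<Pi>\<^sub>M i\<in>UNIV. D);
          z = (\<lambda>j w. em_iter Z Fh \<alpha> \<gamma> \<tau> z0 w j);
          Fz = (\<lambda>j w. Fh (z j w) (w j))
      in (\<integral>w. ((1/2 + \<alpha> * \<mu> / 2 - \<gamma> / 2) * (norm (z (Suc k) w - zs))\<^sup>2
                  + \<alpha> * ((z (Suc k) w - zs) \<bullet> (Fz k w - Fz (Suc k) w))
                  + 1/4 * (norm (z (Suc k) w - z k w))\<^sup>2) \<partial>M)
         \<le> (\<integral>w. (1/2 * (norm (z k w - zs))\<^sup>2
                  + \<tau> * ((z k w - zs) \<bullet> (Fz (k - 1) w - Fz k w))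
                  + (2 * \<tau>\<^sup>2 * L\<^sup>2 + \<gamma> / 2) * (norm (z k w - z (k - 1) w))\<^sup>2) \<partial>M)
           + 8 * \<tau>\<^sup>2 * \<sigma>\<^sup>2 + \<alpha> * \<delta>\<^sup>2 / (2 * \<mu>))"
proof -
  interpret stochastic_extra_momentum Z F D Fh \<mu> L \<delta> \<sigma> \<alpha> \<gamma> \<tau> zs z0
    by (rule stochastic_extra_momentum.intro) (fact Z mono lip muL zs D Fh_meas bias var ds params z0)+
  show ?thesis
    using one_step_expectation[of k] unfolding Fz_def z_def Let_def .
qed

end
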